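(* Let $\Omega\subseteq\mathbb{R}^n$ be open and convex, let $f:\Omega\to\mathbb{R}$ be convex and differentiable with $\nabla f$ Lipschitz continuous with constant $L$ (extend $f$ by $+\infty$ outside $\Omega$), let $g:\mathbb{R}^n\to\mathbb{R}\cup\{+\infty\}$ be convex with closed sublevel sets, and let $h=f+g$ have compact sublevel sets and $h^\star=\inf_x h(x)<\infty$. Run the oracle-structured minimization method (described in the context) from $x^0\in\Omega$, with parameters satisfying $\mu_{\max}\tau_{\min}>2L/(1-\alpha)$. Then for every $k_0$ there exists $k\ge k_0$ with $t_k=1$; that is, undamped steps occur infinitely often.
   Context: Oracle-structured minimization method (OSMM). Fixed parameters: memory $M\ge1$ (integer), $\alpha,\beta\in(0,1)$, $\tau_{\min}>0$, $0<\mu_{\min}\le\mu_{\max}$, $\gamma_{\rm dec}\in(0,1)$, $\gamma_{\rm inc}>1$, and an initial $\mu_0\in[\mu_{\min},\mu_{\max}]$. There is a constant $C$ and, for each $k$, a symmetric positive semidefinite matrix $H_k$ with $\|H_k\|_2\le C$ (otherwise arbitrary). For $k=0,1,2,\dots$: (1) $l_k(x)=\max_{i=\max\{0,k-M+1\},\dots,k}\big(f(x^i)+\nabla f(x^i)^T(x-x^i)\big)$; $\tau_k=\operatorname{Tr}(H_k)/n$; $\lambda_k=\mu_k(\tau_k+\tau_{\min})$. (2) $x^{k+1/2}=\operatorname*{argmin}_x\big(l_k(x)+g(x)+\tfrac12(x-x^k)^T(H_k+\lambda_kI)(x-x^k)\big)$, $v^k=x^{k+1/2}-x^k$. (3) With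 $\phi_k(t)=f(x^k+tv^k)+t\,g(x^{k+1/2})+(1-t)g(x^k)$ for $t\in[0,1]$, let $t_k=\beta^j$ where $j$ is the smallest nonnegative integer with $\phi_k(t_k)\le h(x^k)-\frac{\alpha t_k}{2}(v^k)^T(H_k+\lambda_kI)v^k$; set $x^{k+1}=x^k+t_kv^k$. (4) $\mu_{k+1}=\max\{\gamma_{\rm dec}\mu_k,\mu_{\min}\}$ if $t_k=1$, and $\mu_{k+1}=\min\{\gamma_{\rm inc}\mu_k,\mu_{\max}\}$ if $t_k<1$. *)

theory Defs
  imports "HOL-Analysis.Analysis"
begin

definition ereal_convex :: "('a::real_vector \<Rightarrow> ereal) \<Rightarrow> bool" where
  "ereal_convex g \<longleftrightarrow>
     (\<forall>x y. \<forall>t::real. 0 \<le> t \<and> t \<le> 1 \<longrightarrow>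
        g ((1 - t) *\<^sub>R x + t *\<^sub>R y) \<le> ereal (1 - t) * g x + ereal t * g y)"

definition ext_inf :: "'a set \<Rightarrow> ('a \<Rightarrow> real) \<Rightarrow> 'a \<Rightarrow> ereal" where
  "ext_inf \<Omega> f x = (if x \<in> \<Omega> then ereal (f x) else \<infinity>)"

definition osmm_l :: "nat \<Rightarrow> ('a::real_inner \<Rightarrow> real) \<Rightarrow> ('a \<Rightarrow> 'a) \<Rightarrow> (nat \<Rightarrow> 'a) \<Rightarrow> nat \<Rightarrow> 'a \<Rightarrow> real" where
  "osmm_l M f gradf xs k x = Max ((\<lambda>i. f (xs i) + gradf (xs i) \<bullet> (x - xs i)) ` {(k + 1) - M .. k})"

definition osmm_tau :: "real^'n^'n \<Rightarrow> real" where
  "osmm_tau H = trace H / real CARD('n)"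

definition osmm_quad :: "real^'n^'n \<Rightarrow> real \<Rightarrow> real^'n \<Rightarrow> real" where
  "osmm_quad H lam d = (1/2) * (d \<bullet> ((H + lam *\<^sub>R mat 1) *v d))"

end

(*
  The model l_k minorizes f (f is convex) and dominates the linearization of f at x^k,
  while f exceeds that linearization by at most L |v|^2 (Lipschitz gradient plus convexity).
  Hence, once lam_k >= mu_max tau_min > 2L/(1 - alpha), the proximal step passes the Armijo
  test already at t = 1.  Every damped step multiplies mu_k by gamma_inc > 1 up to the cap
  mu_max, so if undamped steps stopped, mu_k would reach mu_max after finitely many steps and
  the next step would be undamped.  Closed sublevel sets of h are needed only to see that
  dom g lies in Omega, so that f is finite at the proximal points.
*)
theory Submission
  imports Defs
begin

lemma convex_on_gradient_inequality:
  fixes f :: "'a::real_inner \<Rightarrow> real"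
  assumes "convex \<Omega>" "convex_on \<Omega> f" "x \<in> \<Omega>" "y \<in> \<Omega>"
    and "(f has_derivative (\<lambda>d. gx \<bullet> d)) (at x)"
  shows "f x + gx \<bullet> (y - x) \<le> f y"
proof -
  define \<phi> where "\<phi> s = f (x + s *\<^sub>R (y - x))" for s :: real
  have "((\<lambda>s. x + s *\<^sub>R (y - x)) has_derivative (\<lambda>s. s *\<^sub>R (y - x))) (at 0)"
    by (auto intro!: derivative_eq_intros)
  moreover have "(f has_derivative (\<lambda>d. gx \<bullet> d)) (at (x + 0 *\<^sub>R (y - x)))"
    using assms(5) by simp
  ultimately have "(\<phi> has_derivative (\<lambda>s. gx \<bullet> (s *\<^sub>R (y - x)))) (at 0)"
    unfolding \<phi>_def by (rule diff_chain_at[unfolded o_def])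
  then have "(\<phi> has_real_derivative gx \<bullet> (y - x)) (at 0)"
    by (simp add: has_field_derivative_def mult_commute_abs)
  then have "((\<lambda>s. (\<phi> s - \<phi> 0) / s) \<longlongrightarrow> gx \<bullet> (y - x)) (at_right 0)"
    unfolding has_field_derivative_iff by (auto intro: tendsto_mono at_le)
  moreover have "\<forall>\<^sub>F s in at_right 0. (\<phi> s - \<phi> 0) / s \<le> f y - f x"
    using eventually_at_right_real[OF zero_less_one]
  proof eventually_elim
    fix s :: real assume s: "s \<in> {0<..<1}"
    have "\<phi> s = f ((1 - s) *\<^sub>R x + s *\<^sub>R y)"
      by (simp add: \<phi>_def algebra_simps)
    also have "\<dots> \<le> (1 - s) * f x + s * f y"
      using s assms(2-4) by (intro convex_onD) auto
    finally have "\<phi> s - \<phi> 0 \<le> (f y - f x) * s"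
      by (simp add: \<phi>_def algebra_simps)
    then show "(\<phi> s - \<phi> 0) / s \<le> f y - f x"
      using s by (simp add: pos_divide_le_eq)
  qed
  ultimately have "gx \<bullet> (y - x) \<le> f y - f x"
    by (intro tendsto_upperbound) auto
  then show ?thesis by simp
qed

lemma convex_lipschitz_gradient_upper_bound:
  fixes f :: "'a::real_inner \<Rightarrow> real"
  assumes "convex \<Omega>" "convex_on \<Omega> f" "x \<in> \<Omega>" "z \<in> \<Omega>"
    and f_grad: "\<forall>y\<in>\<Omega>. (f has_derivative (\<lambda>d. gradf y \<bullet> d)) (at y)"
    and f_lip: "\<forall>y\<in>\<Omega>. \<forall>z\<in>\<Omega>. norm (gradf y - gradf z) \<le> L * norm (y - z)"
  shows "f z \<le> f x + gradf x \<bullet> (z - x) + L * (norm (z - x))\<^sup>2"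
proof -
  \<comment> \<open>The gradient inequality at z replaces integrating the gradient, at the price of L for L/2.\<close>
  have "f z + gradf z \<bullet> (x - z) \<le> f x"
    using convex_on_gradient_inequality assms by blast
  moreover have "(gradf z - gradf x) \<bullet> (z - x) \<le> norm (gradf z - gradf x) * norm (z - x)"
    by (rule norm_cauchy_schwarz)
  moreover have "norm (gradf z - gradf x) * norm (z - x) \<le> L * norm (z - x) * norm (z - x)"
    using f_lip assms(3,4) by (simp add: mult_right_mono)
  ultimately show ?thesis
    by (simp add: power2_eq_square algebra_simps inner_diff_left inner_diff_right)
qed

lemma convex_lipschitz_gradient_bdd_above:
  fixes f :: "'a::real_inner \<Rightarrow> real"
  assumes "convex \<Omega>" "convex_on \<Omega> f" "bounded S"
    and f_grad: "\<forall>y\<in>\<Omega>. (f has_derivative (\<lambda>d. gradf y \<bullet> d)) (at y)"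
    and f_lip: "\<forall>y\<in>\<Omega>. \<forall>z\<in>\<Omega>. norm (gradf y - gradf z) \<le> L * norm (y - z)"
  shows "bdd_above (f ` (\<Omega> \<inter> S))"
proof (cases "\<Omega> \<inter> S = {}")
  case False
  then obtain y where y: "y \<in> \<Omega>" "y \<in> S" by blast
  obtain r where r: "\<forall>z\<in>S. dist y z \<le> r"
    using assms(3) bounded_any_center by blast
  have "f z \<le> f y + norm (gradf y) * r + \<bar>L\<bar> * r\<^sup>2" if z: "z \<in> \<Omega>" "z \<in> S" for z
  proof -
    have zr: "norm (z - y) \<le> r"
      using r z(2) by (metis dist_commute dist_norm)
    have "gradf y \<bullet> (z - y) \<le> norm (gradf y) * norm (z - y)"
      by (rule norm_cauchy_schwarz)
    also have "\<dots> \<le> norm (gradf y) * r"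
      using zr by (simp add: mult_left_mono)
    finally have "gradf y \<bullet> (z - y) \<le> norm (gradf y) * r" .
    moreover have "L * (norm (z - y))\<^sup>2 \<le> \<bar>L\<bar> * (norm (z - y))\<^sup>2"
      by (simp add: mult_right_mono)
    moreover have "\<dots> \<le> \<bar>L\<bar> * r\<^sup>2"
      using zr by (simp add: mult_left_mono power_mono)
    ultimately show ?thesis
      using convex_lipschitz_gradient_upper_bound[OF assms(1,2) y(1) z(1) f_grad f_lip] by linarith
  qed
  then show ?thesis by (metis IntE bdd_aboveI2)
qed simp

lemma ereal_convex_le_max_on_segment:
  assumes "ereal_convex g" "z \<in> closed_segment y w"
  shows "g z \<le> max (g y) (g w)"
proof -
  obtain u where u: "0 \<le> u" "u \<le> 1" "z = (1 - u) *\<^sub>R y + u *\<^sub>R w"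
    using assms(2) by (auto simp: closed_segment_def)
  have "g z \<le> ereal (1 - u) * g y + ereal u * g w"
    using assms(1) u unfolding ereal_convex_def by blast
  also have "\<dots> \<le> ereal (1 - u) * max (g y) (g w) + ereal u * max (g y) (g w)"
    using u by (intro add_mono ereal_mult_left_mono) auto
  also have "\<dots> = max (g y) (g w)"
    using u by (cases "max (g y) (g w)") (auto simp: algebra_simps)
  finally show ?thesis .
qed

lemma ext_inf_closed_sublevels_dom_subset:
  fixes f :: "'a::real_normed_vector \<Rightarrow> real" and g :: "'a \<Rightarrow> ereal"
  assumes "open \<Omega>"
    and closed_sublevels: "\<forall>c::real. closed {z. ext_inf \<Omega> f z + g z \<le> ereal c}"
    and g_convex: "ereal_convex g" and g_proper: "\<forall>z. g z \<noteq> -\<infinity>"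
    and "ext_inf \<Omega> f y + g y < \<infinity>" "g w \<noteq> \<infinity>"
    and f_bdd: "bdd_above (f ` (\<Omega> \<inter> closed_segment y w))"
  shows "w \<in> \<Omega>"
proof -
  let ?S = "closed_segment y w"
  have y: "y \<in> \<Omega>" "g y \<noteq> \<infinity>"
    using assms(5) by (auto simp: ext_inf_def split: if_splits)
  obtain B where B: "\<And>z. z \<in> \<Omega> \<inter> ?S \<Longrightarrow> f z \<le> B"
    using f_bdd by (auto simp: bdd_above_def)
  obtain G where G: "max (g y) (g w) = ereal G"
    using y(2) assms(6) g_proper by (cases "g y"; cases "g w") (auto simp flip: ereal_max)
  \<comment> \<open>On the segment, lying in \<Omega> is a sublevel condition of ext_inf \<Omega> f + g, hence clopen.\<close>
  have "?S \<inter> \<Omega> = ?S \<inter> {z. ext_inf \<Omega> f z + g z \<le> ereal (B + G)}"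
  proof (intro equalityI subsetI)
    fix z assume z: "z \<in> ?S \<inter> \<Omega>"
    have "ereal (f z) + g z \<le> ereal B + ereal G"
      using B z G ereal_convex_le_max_on_segment[OF g_convex, of z y w]
      by (intro add_mono) auto
    with z show "z \<in> ?S \<inter> {z. ext_inf \<Omega> f z + g z \<le> ereal (B + G)}"
      by (simp add: ext_inf_def)
  next
    fix z assume "z \<in> ?S \<inter> {z. ext_inf \<Omega> f z + g z \<le> ereal (B + G)}"
    with g_proper show "z \<in> ?S \<inter> \<Omega>"
      by (cases "z \<in> \<Omega>") (auto simp: ext_inf_def)
  qed
  then have "closedin (top_of_set ?S) (?S \<inter> \<Omega>)"
    using closed_sublevels by (simp add: closedin_closed_Int)
  moreover have "openin (top_of_set ?S) (?S \<inter> \<Omega>)"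
    using assms(1) by (rule openin_open_Int)
  ultimately have "?S \<inter> \<Omega> = {} \<or> ?S \<inter> \<Omega> = ?S"
    using connected_clopen connected_segment by blast
  moreover have "y \<in> ?S \<inter> \<Omega>"
    using y(1) by simp
  ultimately show ?thesis
    by (metis IntD2 empty_iff ends_in_segment(2))
qed

lemma osmm_tau_nonneg:
  fixes H :: "real^'n^'n"
  assumes "\<forall>v. 0 \<le> v \<bullet> (H *v v)"
  shows "0 \<le> osmm_tau H"
proof -
  have "H $ i $ i = axis i 1 \<bullet> (H *v axis i 1)" for i
    by (metis cart_eq_inner_axis inner_commute matrix_vector_mult_basis column_def vec_lambda_beta)
  then have "0 \<le> H $ i $ i" for i
    using assms by metis
  then show ?thesis
    by (simp add: osmm_tau_def trace_def sum_nonneg)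
qed

lemma osmm_quad_ge_norm:
  fixes H :: "real^'n^'n"
  assumes "\<forall>v. 0 \<le> v \<bullet> (H *v v)"
  shows "lam / 2 * (norm d)\<^sup>2 \<le> osmm_quad H lam d"
proof -
  have "(H + lam *\<^sub>R mat 1) *v d = H *v d + lam *\<^sub>R d"
    by (metis matrix_vector_mul_lid matrix_vector_mult_add_rdistrib scaleR_matrix_vector_assoc)
  then have "osmm_quad H lam d = 1/2 * (d \<bullet> (H *v d)) + lam / 2 * (d \<bullet> d)"
    by (simp add: osmm_quad_def inner_add_right algebra_simps)
  then show ?thesis
    using assms by (simp add: power2_norm_eq_inner)
qed

lemma osmm_l_le_f:
  fixes f :: "'a::real_inner \<Rightarrow> real"
  assumes "convex \<Omega>" "convex_on \<Omega> f"
    and f_grad: "\<forall>y\<in>\<Omega>. (f has_derivative (\<lambda>d. gradf y \<bullet> d)) (at y)"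
    and "1 \<le> M" "\<forall>i. xs i \<in> \<Omega>" "y \<in> \<Omega>"
  shows "osmm_l M f gradf xs k y \<le> f y"
  unfolding osmm_l_def using assms(4)
  by (subst Max_le_iff)
     (auto intro!: convex_on_gradient_inequality[OF assms(1,2)] simp: assms(5,6) f_grad)

lemma osmm_l_ge_linearization:
  assumes "1 \<le> M"
  shows "f (xs k) + gradf (xs k) \<bullet> (y - xs k) \<le> osmm_l M f gradf xs k y"
  unfolding osmm_l_def using assms by (auto intro!: Max_ge)

lemma osmm_full_step_decrease:
  fixes f :: "real^'n \<Rightarrow> real" and g :: "real^'n \<Rightarrow> ereal" and H :: "real^'n^'n"
  assumes "convex \<Omega>" "convex_on \<Omega> f"
    and f_grad: "\<forall>y\<in>\<Omega>. (f has_derivative (\<lambda>d. gradf y \<bullet> d)) (at y)"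
    and f_lip: "\<forall>y\<in>\<Omega>. \<forall>z\<in>\<Omega>. norm (gradf y - gradf z) \<le> L * norm (y - z)"
    and g_proper: "\<forall>z. g z \<noteq> -\<infinity>"
    and "1 \<le> M" "\<forall>i. xs i \<in> \<Omega>" "xh \<in> \<Omega>"
    and H_psd: "\<forall>v. 0 \<le> v \<bullet> (H *v v)"
    and "\<alpha> \<le> 1" "2 * L \<le> (1 - \<alpha>) * lam"
    and prox: "ereal (osmm_l M f gradf xs k xh + osmm_quad H lam (xh - xs k)) + g xh
        \<le> ereal (osmm_l M f gradf xs k (xs k)) + g (xs k)"
  shows "ext_inf \<Omega> f xh + g xh
    \<le> ext_inf \<Omega> f (xs k) + g (xs k) - ereal (\<alpha> * osmm_quad H lam (xh - xs k))"
proof (cases "g (xs k)")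
  case PInf
  then show ?thesis using assms(7) by (simp add: ext_inf_def)
next
  case MInf
  then show ?thesis using g_proper by simp
next
  case (real Gx)
  let ?l = "osmm_l M f gradf xs k" and ?Q = "osmm_quad H lam (xh - xs k)"
  obtain Gh where Gh: "g xh = ereal Gh"
    using prox real g_proper by (cases "g xh") auto
  have "L * (norm (xh - xs k))\<^sup>2 \<le> (1 - \<alpha>) * (lam / 2 * (norm (xh - xs k))\<^sup>2)"
    using mult_right_mono[OF assms(11), of "(norm (xh - xs k))\<^sup>2"] by (simp add: algebra_simps)
  also have "\<dots> \<le> (1 - \<alpha>) * ?Q"
    using assms(10) osmm_quad_ge_norm[OF H_psd] by (intro mult_left_mono) auto
  finally have "f xh \<le> ?l xh + (1 - \<alpha>) * ?Q"
    using convex_lipschitz_gradient_upper_bound[OF assms(1,2) _ assms(8) f_grad f_lip, of "xs k"]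
      osmm_l_ge_linearization[OF assms(6), of f xs k gradf xh] assms(7) by fastforce
  moreover have "?l xh + ?Q + Gh \<le> ?l (xs k) + Gx"
    using prox by (simp add: real Gh)
  moreover have "?l (xs k) \<le> f (xs k)"
    using osmm_l_le_f[OF assms(1,2) f_grad assms(6,7)] assms(7) by blast
  ultimately have "f xh + Gh \<le> f (xs k) + Gx - \<alpha> * ?Q"
    by (simp add: algebra_simps)
  then show ?thesis
    using assms(7,8) by (simp add: ext_inf_def real Gh)
qed

lemma clamped_update_bounds:
  fixes \<mu> :: "nat \<Rightarrow> real"
  assumes "0 \<le> \<mu>min" "\<mu>min \<le> \<mu>max" "\<gamma>dec \<le> 1" "1 \<le> \<gamma>inc" "\<mu>min \<le> \<mu> 0" "\<mu> 0 \<le> \<mu>max"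
    and "\<forall>k. \<mu> (Suc k) = (if P k then max (\<gamma>dec * \<mu> k) \<mu>min else min (\<gamma>inc * \<mu> k) \<mu>max)"
  shows "\<mu>min \<le> \<mu> k \<and> \<mu> k \<le> \<mu>max"
proof (induction k)
  case 0
  then show ?case using assms(5,6) by simp
next
  case (Suc k)
  have "\<gamma>dec * \<mu> k \<le> \<mu> k" "\<mu> k \<le> \<gamma>inc * \<mu> k"
    using Suc assms(1,3,4) mult_right_mono[of _ _ "\<mu> k"] by fastforce+
  then show ?case
    using Suc assms(2,7) by auto
qed

lemma min_geometric_growth_reaches_cap:
  fixes \<mu> :: "nat \<Rightarrow> real"
  assumes "1 < \<gamma>" "0 < \<mu> k0" "0 < c"
    and growth: "\<forall>k\<ge>k0. \<mu> (Suc k) = min (\<gamma> * \<mu> k) c"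
  shows "\<exists>k\<ge>k0. \<mu> k = c"
proof -
  have lower: "min (\<gamma> ^ m * \<mu> k0) c \<le> \<mu> (k0 + m)" for m
  proof (induction m)
    case (Suc m)
    have "min (\<gamma> ^ Suc m * \<mu> k0) c \<le> min (\<gamma> * min (\<gamma> ^ m * \<mu> k0) c) c"
      using assms(1,3) by (auto simp: min_def mult.assoc)
    also have "\<dots> \<le> min (\<gamma> * \<mu> (k0 + m)) c"
      using Suc assms(1) by (simp add: min.coboundedI1)
    finally show ?case
      using growth by simp
  qed simp
  obtain m where "c / \<mu> k0 < \<gamma> ^ m"
    using real_arch_pow[OF assms(1)] by blast
  then have "c \<le> \<mu> (k0 + m)"
    using lower[of m] assms(2) by (simp add: pos_divide_less_eq min_def)
  then have "\<mu> (k0 + Suc m) = c"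
    using growth assms(1,3) by (smt (verit) add_Suc_right le_add1 mult_le_cancel_right1)
  then show ?thesis
    by (intro exI[of _ "k0 + Suc m"]) simp
qed

lemma clamped_update_infinitely_often:
  fixes \<mu> :: "nat \<Rightarrow> real"
  assumes "0 < \<mu>min" "\<mu>min \<le> \<mu>max" "\<gamma>dec \<le> 1" "1 < \<gamma>inc" "\<mu>min \<le> \<mu> 0" "\<mu> 0 \<le> \<mu>max"
    and update: "\<forall>k. \<mu> (Suc k) = (if P k then max (\<gamma>dec * \<mu> k) \<mu>min else min (\<gamma>inc * \<mu> k) \<mu>max)"
    and at_cap: "\<And>k. \<mu> k = \<mu>max \<Longrightarrow> P k"
  shows "\<forall>k0. \<exists>k\<ge>k0. P k"
proof (intro allI, rule ccontr)
  fix k0 assume never: "\<not> (\<exists>k\<ge>k0. P k)"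
  then have growth: "\<forall>k\<ge>k0. \<mu> (Suc k) = min (\<gamma>inc * \<mu> k) \<mu>max"
    using update by auto
  have "\<mu>min \<le> \<mu> k0"
    using clamped_update_bounds[OF _ assms(2,3) _ assms(5,6) update] assms(1,4) by simp
  then have "0 < \<mu> k0"
    using assms(1) by linarith
  then obtain k where "k \<ge> k0" "\<mu> k = \<mu>max"
    using min_geometric_growth_reaches_cap[OF assms(4) _ _ growth] assms(1,2) by auto
  with at_cap never show False by blast
qed

lemma relaxation_iterates_in_convex:
  assumes "convex S" "x 0 \<in> S" "\<And>k. y k \<in> S" "\<And>k. 0 \<le> t k \<and> t k \<le> 1"
    and step: "\<forall>k. x (Suc k) = x k + t k *\<^sub>R (y k - x k)"
  shows "x k \<in> S"
proof (induction k)
  case (Suc k)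
  have "x (Suc k) = (1 - t k) *\<^sub>R x k + t k *\<^sub>R y k"
    using step by (simp add: algebra_simps)
  then show ?case
    using convexD_alt[OF assms(1) Suc assms(3)] assms(4) by simp
qed (rule assms(2))

theorem mainTheorem4:
  fixes \<Omega> :: "(real^'n) set"
    and f :: "real^'n \<Rightarrow> real" and gradf :: "real^'n \<Rightarrow> real^'n"
    and g :: "real^'n \<Rightarrow> ereal"
    and L C \<alpha> \<beta> \<tau>min \<mu>min \<mu>max \<gamma>dec \<gamma>inc :: real
    and M :: nat
    and x xh :: "nat \<Rightarrow> real^'n" and H :: "nat \<Rightarrow> real^'n^'n"
    and \<mu> t :: "nat \<Rightarrow> real" and j :: "nat \<Rightarrow> nat"
  defines "h \<equiv> (\<lambda>y. ext_inf \<Omega> f y + g y)"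
  assumes \<Omega>: "open \<Omega>" "convex \<Omega>"
    and f_convex: "convex_on \<Omega> f"
    and f_grad: "\<forall>y\<in>\<Omega>. (f has_derivative (\<lambda>d. gradf y \<bullet> d)) (at y)"
    and f_lip: "\<forall>y\<in>\<Omega>. \<forall>z\<in>\<Omega>. norm (gradf y - gradf z) \<le> L * norm (y - z)"
    and g_proper: "\<forall>y. g y \<noteq> -\<infinity>"
    and g_convex: "ereal_convex g"
    and g_closed: "\<forall>c::real. closed {y. g y \<le> ereal c}"
    and h_compact: "\<forall>c::real. compact {y. h y \<le> ereal c}"
    and h_finite: "(INF y. h y) < \<infinity>"
    and params: "M \<ge> 1" "0 < \<alpha>" "\<alpha> < 1" "0 < \<beta>" "\<beta> < 1" "\<tau>min > 0"
      "0 < \<mu>min" "\<mu>min \<le> \<mu>max" "0 < \<gamma>dec" "\<gamma>dec < 1" "\<gamma>inc > 1"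
    and mu0: "\<mu>min \<le> \<mu> 0" "\<mu> 0 \<le> \<mu>max"
    and key: "\<mu>max * \<tau>min > 2 * L / (1 - \<alpha>)"
    and x0: "x 0 \<in> \<Omega>"
    and H_sym: "\<forall>k. transpose (H k) = H k"
    and H_psd: "\<forall>k. \<forall>v. 0 \<le> v \<bullet> (H k *v v)"
    and H_bnd: "\<forall>k. onorm (\<lambda>v. H k *v v) \<le> C"
    and step_half: "\<forall>k. \<forall>y.
        ereal (osmm_l M f gradf x k (xh k) + osmm_quad (H k) (\<mu> k * (osmm_tau (H k) + \<tau>min)) (xh k - x k)) + g (xh k)
        \<le> ereal (osmm_l M f gradf x k y + osmm_quad (H k) (\<mu> k * (osmm_tau (H k) + \<tau>min)) (y - x k)) + g y"
    and step_t: "\<forall>k. t k = \<beta> ^ j k"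
    and step_ls: "\<forall>k. \<forall>i \<le> j k.
        (ext_inf \<Omega> f (x k + (\<beta> ^ i) *\<^sub>R (xh k - x k)) + ereal (\<beta> ^ i) * g (xh k)
           + ereal (1 - \<beta> ^ i) * g (x k)
         \<le> h (x k) - ereal (\<alpha> * \<beta> ^ i * osmm_quad (H k) (\<mu> k * (osmm_tau (H k) + \<tau>min)) (xh k - x k)))
        \<longleftrightarrow> i = j k"
    and step_x: "\<forall>k. x (Suc k) = x k + t k *\<^sub>R (xh k - x k)"
    and step_mu: "\<forall>k. \<mu> (Suc k) = (if t k = 1 then max (\<gamma>dec * \<mu> k) \<mu>min else min (\<gamma>inc * \<mu> k) \<mu>max)"
  shows "\<forall>k0. \<exists>k\<ge>k0. t k = 1"
proof -
  obtain y where y: "h y < \<infinity>"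
    using h_finite[unfolded INF_less_iff] by blast
  have g_dom: "w \<in> \<Omega>" if "g w \<noteq> \<infinity>" for w
    using ext_inf_closed_sublevels_dom_subset[OF \<Omega>(1) _ g_convex g_proper y[unfolded h_def] that
        convex_lipschitz_gradient_bdd_above[OF \<Omega>(2) f_convex bounded_closed_segment f_grad f_lip]]
      h_compact compact_imp_closed unfolding h_def by blast
  have xh_dom: "xh k \<in> \<Omega>" for k
  proof (rule g_dom)
    have "g y \<noteq> \<infinity>"
      using y g_proper by (auto simp: h_def ext_inf_def split: if_splits)
    then show "g (xh k) \<noteq> \<infinity>"
      using step_half[rule_format, of k y] g_proper by auto
  qed
  have x_dom: "x k \<in> \<Omega>" for k
    using relaxation_iterates_in_convex[OF \<Omega>(2) x0 xh_dom _ step_x] step_t params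
    by (simp add: power_le_one)
  have full_step: "t k = 1" if "\<mu> k = \<mu>max" for k
  proof -
    let ?lam = "\<mu> k * (osmm_tau (H k) + \<tau>min)"
    have "0 \<le> osmm_tau (H k)"
      using H_psd by (simp add: osmm_tau_nonneg)
    then have "(1 - \<alpha>) * (\<mu>max * \<tau>min) \<le> (1 - \<alpha>) * ?lam"
      using that params by (intro mult_left_mono) auto
    moreover have "2 * L < (1 - \<alpha>) * (\<mu>max * \<tau>min)"
      using key params by (simp add: pos_divide_less_eq mult.commute)
    ultimately have "2 * L \<le> (1 - \<alpha>) * ?lam"
      by linarith
    then have "ext_inf \<Omega> f (xh k) + g (xh k)
        \<le> h (x k) - ereal (\<alpha> * osmm_quad (H k) ?lam (xh k - x k))"
      using osmm_full_step_decrease[OF \<Omega>(2) f_convex f_grad f_lip g_proper params(1) _ xh_dom]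
        step_half[rule_format, of k "x k"] x_dom H_psd params
      unfolding h_def by (simp add: osmm_quad_def)
    then have "j k = 0"
      using step_ls[THEN spec[of _ k], THEN spec[of _ 0]] by (simp flip: zero_ereal_def)
    then show ?thesis
      using step_t by simp
  qed
  show ?thesis
    using clamped_update_infinitely_often[OF params(7,8) _ params(11) mu0 step_mu full_step] params
    by simp
qed

end
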